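(* The numbers $P_{1^{-2}2^{1}3^{2}6^{-1}}(n)$, defined by $\sum_{n\ge0}P_{1^{-2}2^{1}3^{2}6^{-1}}(n)q^n=\frac{f_2f_3^2}{f_1^2f_6}$, form a $3$-convolutive sequence.
   Context: $f_i:=(q^i;q^i)_\infty=\prod_{k\ge1}(1-q^{ik})$. A sequence $(a_n)_{n\ge0}$ is $m$-convolutive if $\sum_{n\ge0}a_{mn}q^n=\big(\sum_{n\ge0}a_nq^n\big)^m$. *)

theory Defs
  imports "HOL-Computational_Algebra.Formal_Power_Series"
begin

text \<open>f_i = (q^i;q^i)_\<infinity> = prod_{k>=1} (1 - q^(i k)) as a formal power series.
  For i >= 1 the factors with k > n do not affect the coefficient of q^n, so the
  n-th coefficient of the infinite product is that of the finite product over k in 1..n.\<close>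
definition eta_fps :: "nat \<Rightarrow> rat fps" where
  "eta_fps i = Abs_fps (\<lambda>n. fps_nth (\<Prod>k\<in>{1..n}. (1 - fps_X ^ (i * k))) n)"

definition m_convolutive :: "nat \<Rightarrow> (nat \<Rightarrow> 'a::comm_ring_1) \<Rightarrow> bool" where
  "m_convolutive m a \<longleftrightarrow> Abs_fps (\<lambda>n. a (m * n)) = (Abs_fps a) ^ m"

definition P_seq :: "nat \<Rightarrow> rat" where
  "P_seq n = fps_nth (eta_fps 2 * eta_fps 3 ^ 2 / (eta_fps 1 ^ 2 * eta_fps 6)) n"

end

(* Write theta(q) for the sum of (-1)^r q^(r^2) over all integers r. Gauss's identity
   f_1^2 = f_2 theta(q), obtained from the finite q-binomial theorem by letting the number of factors
   grow, turns the generating function into F(q) = theta(q^3) / theta(q). Let w be a primitive cube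
   root of unity and S the 3-section of F, i.e. the series with coefficients P(3n). Then
   3 S(q^3) = F(q) + F(wq) + F(w^2 q) = theta(q^3) s_2 / s_3, where s_2 and s_3 are the elementary
   symmetric functions of theta(q), theta(wq), theta(w^2 q). Since theta(q) - theta(q^9) only has
   exponents congruent to 1 mod 3, s_2 = 3 theta(q^9)^2; and f_1(q) f_1(wq) f_1(w^2 q) = f_3^4 / f_9
   gives s_3 theta(q^9) = theta(q^3)^4. Hence S(q^3) = (theta(q^9) / theta(q^3))^3 = F(q^3)^3.
   The coefficients are rational, so the identity is proved over the complex numbers and
   transferred back. *)
theory Submission
  imports Defs "HOL-Computational_Algebra.Formal_Laurent_Series"
begin

(* The simproc poly_fps_eq of Polynomial_FPS rewrites equations between power series into
   equations between polynomials, which gets in the way of the calculations below. *)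
declare [[simproc del: poly_fps_eq]]

definition fps_agree :: "nat \<Rightarrow> 'a fps \<Rightarrow> 'a fps \<Rightarrow> bool" where
  "fps_agree n f g \<longleftrightarrow> (\<forall>k<n. f $ k = g $ k)"

lemma fps_agree_refl [simp]: "fps_agree n f f"
  by (simp add: fps_agree_def)

lemma fps_agree_sym: "fps_agree n f g \<Longrightarrow> fps_agree n g f"
  by (simp add: fps_agree_def)

lemma fps_agree_trans [trans]: "fps_agree n f g \<Longrightarrow> fps_agree n g h \<Longrightarrow> fps_agree n f h"
  by (simp add: fps_agree_def)

lemma fps_agree_add:
  "fps_agree n f g \<Longrightarrow> fps_agree n f' g' \<Longrightarrow> fps_agree n (f + f') (g + g')"
  by (simp add: fps_agree_def)

lemma fps_agree_mult:
  fixes f g :: "'a::comm_semiring_1 fps"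
  shows "fps_agree n f g \<Longrightarrow> fps_agree n f' g' \<Longrightarrow> fps_agree n (f * f') (g * g')"
  unfolding fps_agree_def fps_mult_nth by (auto intro!: sum.cong)

lemma fps_agree_sum:
  "(\<And>i. i \<in> A \<Longrightarrow> fps_agree n (f i) (g i)) \<Longrightarrow> fps_agree n (sum f A) (sum g A)"
  by (induction A rule: infinite_finite_induct) (auto intro: fps_agree_add)

lemma fps_agree_prod:
  fixes f g :: "'b \<Rightarrow> 'a::comm_semiring_1 fps"
  shows "(\<And>i. i \<in> A \<Longrightarrow> fps_agree n (f i) (g i)) \<Longrightarrow> fps_agree n (prod f A) (prod g A)"
  by (induction A rule: infinite_finite_induct) (auto intro: fps_agree_mult)

lemma fps_agree_power:
  fixes f g :: "'a::comm_semiring_1 fps"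
  shows "fps_agree n f g \<Longrightarrow> fps_agree n (f ^ k) (g ^ k)"
  by (induction k) (auto intro: fps_agree_mult)

lemma fps_eq_if_agree: "(\<And>n. fps_agree n f g) \<Longrightarrow> f = g"
  unfolding fps_agree_def by (intro fps_ext) blast

lemma fps_agree_X_power_mult_zero:
  fixes f :: "'a::comm_semiring_1 fps"
  shows "n \<le> m \<Longrightarrow> fps_agree n (fps_X ^ m * f) 0"
  by (simp add: fps_agree_def fps_X_power_mult_nth)

lemma fps_agree_one_minus_X_power:
  "n \<le> m \<Longrightarrow> fps_agree n (1 - fps_X ^ m :: 'a::comm_ring_1 fps) 1"
  by (simp add: fps_agree_def)

lemma fps_agree_mult_cancel:
  fixes u :: "'a::field fps"
  assumes "u $ 0 \<noteq> 0" "fps_agree n (f * u) (g * u)"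
  shows "fps_agree n f g"
proof -
  have "fps_agree n (f * u * inverse u) (g * u * inverse u)"
    using assms(2) by (rule fps_agree_mult) simp
  with assms(1) show ?thesis
    by (simp add: mult.assoc inverse_mult_eq_1')
qed

lemma fps_agree_compose_X_power:
  fixes f g :: "'a::comm_ring_1 fps"
  shows "fps_agree n f g \<Longrightarrow> fps_agree n (f oo fps_X ^ d) (g oo fps_X ^ d)"
  unfolding fps_agree_def fps_nth_compose_X_power
  by (metis div_le_dividend le_less_trans)

lemma fps_compose_X_power_X_power:
  "a \<ge> 1 \<Longrightarrow> b \<ge> 1 \<Longrightarrow> (f oo fps_X ^ a) oo fps_X ^ b = f oo fps_X ^ (a * b :: nat)"
  for f :: "'a::idom fps"
  by (simp add: fps_compose_assoc [symmetric] fps_X_power_compose mult.commute flip: power_mult)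

lemma fps_compose_X_power_inject:
  assumes "f oo fps_X ^ d = g oo fps_X ^ d" "d \<ge> 1"
  shows "f = (g :: 'a::comm_ring_1 fps)"
proof (rule fps_ext)
  fix n
  have "(f oo fps_X ^ d) $ (d * n) = (g oo fps_X ^ d) $ (d * n)"
    using assms(1) by simp
  with assms(2) show "f $ n = g $ n"
    by (simp add: fps_nth_compose_X_power)
qed

definition fps_scale :: "'a::comm_ring_1 \<Rightarrow> 'a fps \<Rightarrow> 'a fps" where
  "fps_scale c f = f oo (fps_const c * fps_X)"

lemma fps_scale_nth [simp]: "fps_scale c f $ n = c ^ n * f $ n"
  by (simp add: fps_scale_def)

lemma fps_scale_add: "fps_scale c (f + g) = fps_scale c f + fps_scale c g"
  by (simp add: fps_scale_def fps_compose_add_distrib)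

lemma fps_scale_mult: "fps_scale c (f * g) = fps_scale c f * fps_scale c (g :: 'a::idom fps)"
  by (simp add: fps_scale_def fps_compose_mult_distrib)

lemma fps_scale_power: "fps_scale c (f ^ n) = fps_scale c (f :: 'a::idom fps) ^ n"
  by (simp add: fps_scale_def fps_compose_power)

lemma fps_scale_prod: "fps_scale c (prod f A) = (\<Prod>x\<in>A. fps_scale c (f x :: 'a::idom fps))"
  by (simp add: fps_scale_def fps_compose_prod_distrib)

lemma fps_scale_one_minus_X_power:
  "fps_scale c (1 - fps_X ^ k) = 1 - fps_const (c ^ k) * fps_X ^ k"
  by (rule fps_ext) (simp add: fps_X_power_mult_nth)

lemma fps_agree_fps_scale: "fps_agree n f g \<Longrightarrow> fps_agree n (fps_scale c f) (fps_scale c g)"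
  by (simp add: fps_agree_def)

lemma fps_scale_compose_X_power: "c ^ d = 1 \<Longrightarrow> fps_scale c (f oo fps_X ^ d) = f oo fps_X ^ d"
  by (rule fps_ext) (auto simp: fps_nth_compose_X_power power_mult)

lemma fps_scale_exponents_1_mod_3:
  assumes "c ^ 3 = 1" "\<And>n. n mod 3 \<noteq> 1 \<Longrightarrow> f $ n = 0"
  shows "fps_scale c f = fps_const c * f"
proof (rule fps_ext)
  fix n
  show "fps_scale c f $ n = (fps_const c * f) $ n"
  proof (cases "n mod 3 = 1")
    case True
    then obtain q where "n = 3 * q + 1"
      by (metis div_mult_mod_eq mult.commute)
    then have "c ^ n = (c ^ 3) ^ q * c"
      by (simp add: power_add power_mult)
    with assms(1) True show ?thesis
      by simp
  qed (simp add: assms(2))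
qed

section \<open>Euler products\<close>

lemma prod_lessThan_add:
  fixes m n :: nat
  shows "prod f {..<m + n} = prod f {..<m} * (\<Prod>i<n. f (m + i))"
proof -
  have "prod f {..<m + n} = prod f {0..<m} * prod f {m..<m + n}"
    using prod.atLeastLessThan_concat[of 0 m "m + n" f] by (simp add: atLeast0LessThan)
  also have "prod f {m..<m + n} = (\<Prod>i<n. f (m + i))"
    using prod.shift_bounds_nat_ivl[of f 0 m n] by (simp add: atLeast0LessThan add.commute)
  finally show ?thesis by (simp add: atLeast0LessThan)
qed

lemma prod_atLeast1_atMost_even_odd:
  fixes n :: nat
  shows "prod g {1..2 * n} = (\<Prod>k\<in>{1..n}. g (2 * k)) * (\<Prod>i<n. g (2 * i + 1))"
proof (induction n)
  case (Suc n)
  have "{1..2 * Suc n} = insert (Suc (Suc (2 * n))) (insert (Suc (2 * n)) {1..2 * n})"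
    by auto
  with Suc show ?case
    by (simp add: mult_ac)
qed simp

lemma prod_atLeast1_atMost_triple:
  fixes M :: nat
  shows "prod g {1..3 * M} = (\<Prod>m<M. g (3 * m + 1) * g (3 * m + 2) * g (3 * m + 3))"
proof (induction M)
  case (Suc M)
  have "{1..3 * Suc M} = insert (3 * M + 3) (insert (3 * M + 2) (insert (3 * M + 1) {1..3 * M}))"
    by auto
  with Suc show ?case
    by (simp add: mult_ac)
qed simp

(* The series eta_fps over an arbitrary coefficient ring: the argument needs cube roots of unity. *)
definition euler_fps :: "nat \<Rightarrow> 'a::comm_ring_1 fps" where
  "euler_fps i = Abs_fps (\<lambda>n. (\<Prod>k\<in>{1..n}. 1 - fps_X ^ (i * k)) $ n)"

lemma euler_partial_prod_agree:
  assumes "i \<ge> 1" "n \<le> Suc M" "M \<le> M'"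
  shows "fps_agree n (\<Prod>k\<in>{1..M}. 1 - fps_X ^ (i * k) :: 'a::comm_ring_1 fps)
                     (\<Prod>k\<in>{1..M'}. 1 - fps_X ^ (i * k))"
proof -
  have "{1..M'} = {1..M} \<union> {Suc M..M'}" "{1..M} \<inter> {Suc M..M'} = {}"
    using assms(3) by auto
  then have split: "(\<Prod>k\<in>{1..M'}. 1 - fps_X ^ (i * k) :: 'a fps) =
      (\<Prod>k\<in>{1..M}. 1 - fps_X ^ (i * k)) * (\<Prod>k\<in>{Suc M..M'}. 1 - fps_X ^ (i * k))"
    by (simp add: prod.union_disjoint)
  have "fps_agree n (\<Prod>k\<in>{Suc M..M'}. 1 - fps_X ^ (i * k) :: 'a fps) (\<Prod>k\<in>{Suc M..M'}. 1)"
  proof (rule fps_agree_prod)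
    fix k assume "k \<in> {Suc M..M'}"
    with assms(1,2) have "n \<le> i * k"
      by (metis atLeastAtMost_iff le_trans mult_le_mono1 mult_1)
    then show "fps_agree n (1 - fps_X ^ (i * k) :: 'a fps) 1"
      by (rule fps_agree_one_minus_X_power)
  qed
  then have "fps_agree n (\<Prod>k\<in>{Suc M..M'}. 1 - fps_X ^ (i * k) :: 'a fps) 1"
    by simp
  then show ?thesis
    unfolding split using fps_agree_mult[OF fps_agree_refl] fps_agree_sym by fastforce
qed

lemma euler_fps_agree:
  assumes "i \<ge> 1" "n \<le> M"
  shows "fps_agree n (euler_fps i) (\<Prod>k\<in>{1..M}. 1 - fps_X ^ (i * k))"
  unfolding fps_agree_def
proof (intro allI impI)
  fix m assume "m < n"
  with assms have "fps_agree (Suc m) (\<Prod>k\<in>{1..m}. 1 - fps_X ^ (i * k) :: 'a fps)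
                                     (\<Prod>k\<in>{1..M}. 1 - fps_X ^ (i * k))"
    by (intro euler_partial_prod_agree) auto
  then have "(\<Prod>k\<in>{1..m}. 1 - fps_X ^ (i * k) :: 'a fps) $ m =
             (\<Prod>k\<in>{1..M}. 1 - fps_X ^ (i * k)) $ m"
    unfolding fps_agree_def by blast
  then show "euler_fps i $ m = (\<Prod>k\<in>{1..M}. 1 - fps_X ^ (i * k) :: 'a fps) $ m"
    by (simp add: euler_fps_def)
qed

lemma euler_fps_nth_0 [simp]: "euler_fps i $ 0 = 1"
  by (simp add: euler_fps_def)

lemma euler_fps_neq_0: "euler_fps i \<noteq> 0"
  using euler_fps_nth_0 [of i] by (metis fps_zero_nth zero_neq_one)

lemma euler_fps_compose_X_power:
  assumes "k \<ge> 1" "i \<ge> 1"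
  shows "euler_fps i oo fps_X ^ k = (euler_fps (k * i) :: 'a::idom fps)"
proof (rule fps_eq_if_agree)
  fix n
  have "fps_agree n (euler_fps i oo fps_X ^ k) ((\<Prod>j\<in>{1..n}. 1 - fps_X ^ (i * j)) oo fps_X ^ k)"
    using assms by (intro fps_agree_compose_X_power euler_fps_agree) auto
  also have "(\<Prod>j\<in>{1..n}. 1 - fps_X ^ (i * j)) oo fps_X ^ k =
             (\<Prod>j\<in>{1..n}. 1 - fps_X ^ (k * i * j) :: 'a fps)"
    using assms by (simp add: fps_compose_prod_distrib fps_compose_sub_distrib
                              fps_X_power_compose mult_ac flip: power_mult)
  also have "fps_agree n \<dots> (euler_fps (k * i))"
    using assms by (intro fps_agree_sym[OF euler_fps_agree]) auto
  finally show "fps_agree n (euler_fps i oo fps_X ^ k) (euler_fps (k * i) :: 'a fps)" .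
qed

section \<open>Gaussian binomial coefficients\<close>

fun gauss_binomial :: "'a::comm_ring_1 \<Rightarrow> nat \<Rightarrow> nat \<Rightarrow> 'a" where
  "gauss_binomial q 0 0 = 1"
| "gauss_binomial q 0 (Suc k) = 0"
| "gauss_binomial q (Suc n) 0 = 1"
| "gauss_binomial q (Suc n) (Suc k) = gauss_binomial q n k + q ^ Suc k * gauss_binomial q n (Suc k)"

lemma gauss_binomial_eq_0: "n < k \<Longrightarrow> gauss_binomial q n k = 0"
proof (induction n arbitrary: k)
  case 0 then show ?case by (cases k) auto
next
  case (Suc n) then show ?case by (cases k) auto
qed

lemma gauss_binomial_0_right [simp]: "gauss_binomial q n 0 = 1"
  by (cases n) auto

lemma q_binomial_theorem:
  fixes q s t :: "'a::comm_ring_1"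
  shows "(\<Prod>i<n. s + q ^ i * t) =
         (\<Sum>k\<le>n. gauss_binomial q n k * q ^ (k choose 2) * t ^ k * s ^ (n - k))"
proof (induction n arbitrary: t)
  case 0
  show ?case by (simp add: binomial_eq_0)
next
  case (Suc n)
  have choose: "q ^ (Suc k choose 2) = q ^ (k choose 2) * q ^ k" for k
    by (simp add: numeral_2_eq_2 power_add)
  define c where "c k = gauss_binomial q n k * q ^ (Suc k choose 2) * t ^ k" for k
  have "(\<Prod>i<Suc n. s + q ^ i * t) = (s + t) * (\<Prod>i<n. s + q ^ i * (q * t))"
    by (simp only: prod.lessThan_Suc_shift) (simp add: mult_ac)
  also have "\<dots> = (s + t) * (\<Sum>k\<le>n. c k * s ^ (n - k))"
    by (simp only: Suc.IH) (simp add: c_def choose power_mult_distrib mult_ac)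
  also have "\<dots> = (\<Sum>k\<le>n. c k * s ^ (Suc n - k)) + (\<Sum>k\<le>n. c k * t * s ^ (n - k))"
    unfolding sum_distrib_left sum.distrib[symmetric]
    by (intro sum.cong) (auto simp: Suc_diff_le algebra_simps)
  also have "(\<Sum>k\<le>n. c k * s ^ (Suc n - k)) =
      s ^ Suc n + (\<Sum>k\<le>n. q ^ Suc k * gauss_binomial q n (Suc k) * q ^ (Suc k choose 2)
                               * t ^ Suc k * s ^ (n - k))"
  proof -
    have "(\<Sum>k\<le>n. c k * s ^ (Suc n - k)) = (\<Sum>k\<le>Suc n. c k * s ^ (Suc n - k))"
      by (simp add: c_def gauss_binomial_eq_0)
    also have "\<dots> = s ^ Suc n + (\<Sum>k\<le>n. c (Suc k) * s ^ (n - k))"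
      by (subst sum.atMost_Suc_shift) (simp add: c_def binomial_eq_0)
    finally show ?thesis
      by (simp add: c_def choose mult_ac)
  qed
  also have "s ^ Suc n + (\<Sum>k\<le>n. q ^ Suc k * gauss_binomial q n (Suc k) * q ^ (Suc k choose 2)
                                    * t ^ Suc k * s ^ (n - k))
             + (\<Sum>k\<le>n. c k * t * s ^ (n - k)) =
      (\<Sum>k\<le>Suc n. gauss_binomial q (Suc n) k * q ^ (k choose 2) * t ^ k * s ^ (Suc n - k))"
    by (subst sum.atMost_Suc_shift) (simp add: c_def binomial_eq_0 algebra_simps sum.distrib)
  finally show ?case .
qed

definition q_pochhammer :: "'a::comm_ring_1 \<Rightarrow> nat \<Rightarrow> 'a" where
  "q_pochhammer q n = (\<Prod>k\<in>{1..n}. 1 - q ^ k)"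

lemma q_pochhammer_0 [simp]: "q_pochhammer q 0 = 1"
  by (simp add: q_pochhammer_def)

lemma q_pochhammer_Suc: "q_pochhammer q (Suc n) = q_pochhammer q n * (1 - q ^ Suc n)"
  by (simp add: q_pochhammer_def)

lemma gauss_binomial_q_pochhammer:
  "k \<le> n \<Longrightarrow> gauss_binomial q n k * q_pochhammer q k * q_pochhammer q (n - k) = q_pochhammer q n"
proof (induction n arbitrary: k)
  case 0
  then show ?case by simp
next
  case (Suc n)
  show ?case
  proof (cases k)
    case 0
    then show ?thesis by simp
  next
    case (Suc j)
    with Suc.prems have "j \<le> n" by simp
    let ?P = "q_pochhammer q"
    have "gauss_binomial q n j * ?P (Suc j) * ?P (n - j) =
          (gauss_binomial q n j * ?P j * ?P (n - j)) * (1 - q ^ Suc j)"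
      by (simp only: q_pochhammer_Suc ac_simps)
    with Suc.IH[OF \<open>j \<le> n\<close>]
    have first: "gauss_binomial q n j * ?P (Suc j) * ?P (n - j) = ?P n * (1 - q ^ Suc j)"
      by simp
    have second: "q ^ Suc j * gauss_binomial q n (Suc j) * ?P (Suc j) * ?P (n - j) =
                  q ^ Suc j * ?P n * (1 - q ^ (n - j))"
    proof (cases "j < n")
      case True
      then have "?P (n - j) = ?P (n - Suc j) * (1 - q ^ (n - j))"
        by (metis Suc_diff_Suc q_pochhammer_Suc)
      then have "q ^ Suc j * gauss_binomial q n (Suc j) * ?P (Suc j) * ?P (n - j) =
          q ^ Suc j * (gauss_binomial q n (Suc j) * ?P (Suc j) * ?P (n - Suc j)) * (1 - q ^ (n - j))"
        by (simp only: ac_simps)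
      with Suc.IH[of "Suc j"] True show ?thesis
        by simp
    next
      case False
      with \<open>j \<le> n\<close> show ?thesis by (simp add: gauss_binomial_eq_0)
    qed
    have "gauss_binomial q (Suc n) k * ?P k * ?P (Suc n - k) =
          gauss_binomial q n j * ?P (Suc j) * ?P (n - j) +
          q ^ Suc j * gauss_binomial q n (Suc j) * ?P (Suc j) * ?P (n - j)"
      by (simp add: \<open>k = Suc j\<close> distrib_right)
    also have "\<dots> = ?P n * (1 - q ^ Suc j * q ^ (n - j))"
      unfolding first second by (simp add: algebra_simps)
    also have "q ^ Suc j * q ^ (n - j) = q ^ Suc n"
      using \<open>j \<le> n\<close> by (simp only: power_add [symmetric]) simp
    finally show ?thesis
      by (simp add: q_pochhammer_Suc)
  qed
qed

lemma q_pochhammer_X_power: "q_pochhammer (fps_X ^ i) k = (\<Prod>l\<in>{1..k}. 1 - fps_X ^ (i * l))"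
  by (simp add: q_pochhammer_def power_mult)

lemma q_pochhammer_X_power_nth_0: "i \<ge> 1 \<Longrightarrow> q_pochhammer (fps_X ^ i) k $ 0 = (1::'a::comm_ring_1)"
  by (induction k) (simp_all add: q_pochhammer_Suc flip: power_mult)

lemma gauss_binomial_X_power_agree:
  assumes "i \<ge> 1" "k \<le> N" "m \<le> Suc (N - k)"
  shows "fps_agree m (gauss_binomial (fps_X ^ i) N k * q_pochhammer (fps_X ^ i) k) (1 :: 'a::field fps)"
proof (rule fps_agree_mult_cancel)
  let ?P = "q_pochhammer (fps_X ^ i) :: nat \<Rightarrow> 'a fps"
  show "?P (N - k) $ 0 \<noteq> 0"
    using assms(1) by (simp add: q_pochhammer_X_power_nth_0)
  have "fps_agree m (?P N) (?P (N - k))"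
    unfolding q_pochhammer_X_power using assms
    by (intro fps_agree_sym[OF euler_partial_prod_agree]) auto
  then show "fps_agree m (gauss_binomial (fps_X ^ i) N k * ?P k * ?P (N - k)) (1 * ?P (N - k))"
    by (simp add: gauss_binomial_q_pochhammer assms(2))
qed

section \<open>Gauss's identity\<close>

(* theta(q) = sum over r in Z of (-1)^r q^(r^2); the sign is written (-1)^m because r and r^2
   have the same parity. *)
definition theta_fps :: "'a::comm_ring_1 fps" where
  "theta_fps = Abs_fps (\<lambda>m. if m = 0 then 1 else if \<exists>r. m = r\<^sup>2 then 2 * (-1) ^ m else 0)"

lemma theta_fps_nth_0 [simp]: "theta_fps $ 0 = 1"
  by (simp add: theta_fps_def)

lemma theta_fps_nth_square: "theta_fps $ (r\<^sup>2) = (if r = 0 then 1 else 2 * (-1) ^ r)"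
  by (auto simp: theta_fps_def minus_one_power_iff)

lemma theta_fps_nth_nonsquare: "(\<nexists>r. m = r\<^sup>2) \<Longrightarrow> theta_fps $ m = 0"
  by (cases "m = 0") (auto simp: theta_fps_def)

lemma fps_neg_one_power: "(-1 :: 'a::comm_ring_1 fps) ^ k = fps_const ((-1) ^ k)"
  by (simp flip: fps_const_power fps_const_neg)

lemma gauss_exponent_identity:
  assumes "j \<le> 2 * n"
  shows "2 * (j choose 2) + (2 * n - 1) * (2 * n - j) =
         (max j n - min j n)\<^sup>2 + (n * (n - 1) + (2 * n - 1) * n)"
proof -
  have choose: "2 * (j choose 2) = j * (j - 1)"
    by (induction j) (auto simp: numeral_2_eq_2 algebra_simps)
  show ?thesis
  proof (cases "j \<le> n")
    case True
    then obtain d where n: "n = j + d" by (metis le_add_diff_inverse)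
    show ?thesis unfolding choose unfolding n
      by (cases j; cases d) (auto simp: algebra_simps power2_eq_square)
  next
    case False
    with assms obtain d e where j: "j = n + Suc d" and n: "n = Suc d + e"
      by (metis add_Suc add_Suc_right add_le_cancel_left le_add_diff_inverse less_imp_Suc_add
                mult_2 not_le)
    show ?thesis unfolding choose unfolding j n
      by (auto simp: algebra_simps power2_eq_square)
  qed
qed

lemma finite_theta_product:
  "(\<Prod>i<2 * n. fps_X ^ (2 * n - 1) + (fps_X\<^sup>2) ^ i * (-1)) =
   (-1) ^ n * fps_X ^ (n * (n - 1) + (2 * n - 1) * n) * (\<Prod>i<n. 1 - fps_X ^ (2 * i + 1) :: 'a::idom fps)\<^sup>2"
  (is "prod ?f _ = _ * ?Q\<^sup>2")
proof -
  have "?f i = (-1) * fps_X ^ (2 * i) * (1 - fps_X ^ (2 * (n - Suc i) + 1))" if "i < n" for i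
  proof -
    from that have "2 * i + (2 * (n - Suc i) + 1) = 2 * n - 1" by simp
    then have "fps_X ^ (2 * i) * fps_X ^ (2 * (n - Suc i) + 1) = (fps_X ^ (2 * n - 1) :: 'a fps)"
      by (simp only: power_add [symmetric])
    then show ?thesis by (simp add: algebra_simps flip: power_mult)
  qed
  then have "prod ?f {..<n} = (\<Prod>i<n. (-1) * fps_X ^ (2 * i) * (1 - fps_X ^ (2 * (n - Suc i) + 1)))"
    by (intro prod.cong) simp_all
  also have "\<dots> =
      (-1) ^ n * (\<Prod>i<n. fps_X ^ (2 * i)) * (\<Prod>i<n. 1 - fps_X ^ (2 * (n - Suc i) + 1))"
    by (simp only: prod.distrib prod_constant card_lessThan)
  also have "(\<Sum>i<n. 2 * i) = n * (n - 1)"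
    by (induction n) (auto simp: algebra_simps)
  then have "(\<Prod>i<n. fps_X ^ (2 * i)) = (fps_X ^ (n * (n - 1)) :: 'a fps)"
    by (simp flip: power_sum)
  also have "(\<Prod>i<n. 1 - fps_X ^ (2 * (n - Suc i) + 1)) = ?Q"
    by (rule prod.nat_diff_reindex)
  finally have low: "prod ?f {..<n} = (-1) ^ n * fps_X ^ (n * (n - 1)) * ?Q" .
  have "?f (n + i) = fps_X ^ (2 * n - 1) * (1 - fps_X ^ (2 * i + 1))" if "i < n" for i
  proof -
    from that have "2 * n - 1 + (2 * i + 1) = 2 * (n + i)" by simp
    then have "fps_X ^ (2 * n - 1) * fps_X ^ (2 * i + 1) = ((fps_X\<^sup>2) ^ (n + i) :: 'a fps)"
      by (simp only: power_add [symmetric] power_mult [symmetric])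
    then show ?thesis by (simp add: algebra_simps)
  qed
  then have "(\<Prod>i<n. ?f (n + i)) = (\<Prod>i<n. fps_X ^ (2 * n - 1) * (1 - fps_X ^ (2 * i + 1)))"
    by (intro prod.cong) simp_all
  also have "\<dots> = fps_X ^ ((2 * n - 1) * n) * ?Q"
    by (simp add: prod.distrib power_mult)
  finally have high: "(\<Prod>i<n. ?f (n + i)) = fps_X ^ ((2 * n - 1) * n) * ?Q" .
  show ?thesis
    using prod_lessThan_add [of ?f n n] unfolding mult_2 [symmetric] low high
    by (simp add: power_add power2_eq_square mult_ac)
qed

lemma finite_theta_identity:
  "(\<Sum>j\<le>2 * n. (-1) ^ (n + j) * fps_X ^ ((max j n - min j n)\<^sup>2) * gauss_binomial (fps_X\<^sup>2) (2 * n) j) =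
   (\<Prod>i<n. 1 - fps_X ^ (2 * i + 1) :: 'a::idom fps)\<^sup>2"
  (is "?S = ?Q\<^sup>2")
proof -
  define K where "K = n * (n - 1) + (2 * n - 1) * n"
  have "(-1) ^ n * fps_X ^ K * ?Q\<^sup>2 = (\<Prod>i<2 * n. fps_X ^ (2 * n - 1) + (fps_X\<^sup>2) ^ i * (-1))"
    unfolding K_def by (rule finite_theta_product [symmetric])
  also have "\<dots> = (\<Sum>j\<le>2 * n. gauss_binomial (fps_X\<^sup>2) (2 * n) j * (fps_X\<^sup>2) ^ (j choose 2) * (-1) ^ j
                                 * (fps_X ^ (2 * n - 1)) ^ (2 * n - j))"
    by (rule q_binomial_theorem)
  also have "\<dots> = (-1) ^ n * fps_X ^ K * ?S"
    unfolding sum_distrib_left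
  proof (rule sum.cong)
    fix j assume "j \<in> {..2 * n}"
    let ?G = "gauss_binomial (fps_X\<^sup>2) (2 * n) j :: 'a fps"
    let ?d = "(max j n - min j n)\<^sup>2"
    have exponent: "(fps_X\<^sup>2) ^ (j choose 2) * (fps_X ^ (2 * n - 1)) ^ (2 * n - j) =
                    (fps_X ^ K * fps_X ^ ?d :: 'a fps)"
      using \<open>j \<in> {..2 * n}\<close> gauss_exponent_identity [of j n]
      by (simp add: K_def add.commute flip: power_mult power_add)
    have "(-1) ^ n * ((-1) ^ (n + j) :: 'a fps) = ((-1) * (-1)) ^ n * (-1) ^ j"
      by (simp only: power_add power_mult_distrib mult.assoc)
    then have sign: "(-1) ^ j = (-1) ^ n * ((-1) ^ (n + j) :: 'a fps)"
      by simp
    have "?G * (fps_X\<^sup>2) ^ (j choose 2) * (-1) ^ j * (fps_X ^ (2 * n - 1)) ^ (2 * n - j) =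
          ?G * (-1) ^ j * ((fps_X\<^sup>2) ^ (j choose 2) * (fps_X ^ (2 * n - 1)) ^ (2 * n - j))"
      by (simp only: ac_simps)
    also have "\<dots> = ?G * ((-1) ^ n * (-1) ^ (n + j)) * (fps_X ^ K * fps_X ^ ?d)"
      by (simp only: exponent sign)
    finally show "?G * (fps_X\<^sup>2) ^ (j choose 2) * (-1) ^ j * (fps_X ^ (2 * n - 1)) ^ (2 * n - j) =
                  (-1) ^ n * fps_X ^ K * ((-1) ^ (n + j) * fps_X ^ ?d * ?G)"
      by (simp only: ac_simps)
  qed simp
  finally show ?thesis
    by simp
qed

lemma theta_partial_sum_agree:
  assumes "m \<le> n"
  shows "fps_agree m (\<Sum>j\<le>2 * n. (-1) ^ (n + j) * fps_X ^ ((max j n - min j n)\<^sup>2))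
                     (theta_fps :: 'a::comm_ring_1 fps)"
  unfolding fps_agree_def
proof (intro allI impI)
  fix k assume "k < m"
  let ?J = "{j \<in> {..2 * n}. (max j n - min j n)\<^sup>2 = k}"
  have "(\<Sum>j\<le>2 * n. (-1) ^ (n + j) * fps_X ^ ((max j n - min j n)\<^sup>2) :: 'a fps) $ k =
        (\<Sum>j\<le>2 * n. if (max j n - min j n)\<^sup>2 = k then (-1) ^ (n + j) else (0 :: 'a))"
    unfolding fps_sum_nth
    by (intro sum.cong) (auto simp: fps_X_power_mult_right_nth fps_neg_one_power)
  also have "\<dots> = (\<Sum>j\<in>?J. (-1) ^ (n + j))"
    by (rule sum.inter_filter [symmetric]) simp
  also have "\<dots> = theta_fps $ k"
  proof (cases "\<exists>r. k = r\<^sup>2")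
    case True
    then obtain r where k: "k = r\<^sup>2" by blast
    have "r \<le> r\<^sup>2" by (simp add: power2_eq_square)
    with k \<open>k < m\<close> assms have "r < n" by linarith
    have "?J = {n - r, n + r}"
      using \<open>r < n\<close> by (auto simp: k)
    moreover have "(-1) ^ (n + (n - r)) = ((-1) ^ r :: 'a)" "(-1) ^ (n + (n + r)) = ((-1) ^ r :: 'a)"
      using \<open>r < n\<close> by (simp_all add: minus_one_power_iff)
    ultimately show ?thesis
      by (cases "r = 0") (simp_all add: k theta_fps_nth_square)
  next
    case False
    then have "?J = {}" by auto
    show ?thesis
      unfolding \<open>?J = {}\<close> by (simp add: theta_fps_nth_nonsquare False)
  qed
  finally show "(\<Sum>j\<le>2 * n. (-1) ^ (n + j) * fps_X ^ ((max j n - min j n)\<^sup>2)) $ k =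
                (theta_fps :: 'a fps) $ k" .
qed

lemma gauss_binomial_term_agree:
  assumes "j \<le> 2 * n" "2 * m \<le> n"
  shows "fps_agree m (euler_fps 2 * gauss_binomial (fps_X\<^sup>2) (2 * n) j * fps_X ^ ((max j n - min j n)\<^sup>2))
                     (fps_X ^ ((max j n - min j n)\<^sup>2) :: 'a::field fps)"
proof (cases "m \<le> (max j n - min j n)\<^sup>2")
  case True
  let ?G = "gauss_binomial (fps_X\<^sup>2) (2 * n) j :: 'a fps"
  from True have "fps_agree m (fps_X ^ ((max j n - min j n)\<^sup>2) * (euler_fps 2 * ?G)) 0"
                 "fps_agree m (fps_X ^ ((max j n - min j n)\<^sup>2) * 1) (0 :: 'a fps)"
    by (rule fps_agree_X_power_mult_zero)+
  then show ?thesis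
    by (simp add: fps_agree_def mult_ac)
next
  case False
  have "max j n - min j n \<le> (max j n - min j n)\<^sup>2"
    unfolding power2_eq_square by (rule le_square)
  with False have "max j n - min j n < m"
    by linarith
  with assms have "m \<le> j" "m \<le> Suc (2 * n - j)"
    by arith+
  have "fps_agree m (euler_fps 2) (q_pochhammer (fps_X\<^sup>2) j :: 'a fps)"
    unfolding q_pochhammer_X_power using \<open>m \<le> j\<close> by (intro euler_fps_agree) simp_all
  then have "fps_agree m (euler_fps 2 * gauss_binomial (fps_X\<^sup>2) (2 * n) j)
                         (gauss_binomial (fps_X\<^sup>2) (2 * n) j * q_pochhammer (fps_X\<^sup>2) j :: 'a fps)"
    by (simp add: fps_agree_mult mult.commute)
  also have "fps_agree m \<dots> 1"
    using assms \<open>m \<le> Suc (2 * n - j)\<close> by (intro gauss_binomial_X_power_agree) auto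
  finally have "fps_agree m (euler_fps 2 * gauss_binomial (fps_X\<^sup>2) (2 * n) j * fps_X ^ ((max j n - min j n)\<^sup>2))
                            (1 * fps_X ^ ((max j n - min j n)\<^sup>2) :: 'a fps)"
    by (rule fps_agree_mult) simp
  then show ?thesis
    by simp
qed

lemma euler_fps_1_squared: "euler_fps 1 ^ 2 = euler_fps 2 * (theta_fps :: 'a::field fps)"
proof (rule fps_eq_if_agree)
  fix m :: nat
  define n where "n = 2 * m"
  let ?d = "\<lambda>j. (max j n - min j n)\<^sup>2"
  let ?Q = "\<Prod>i<n. 1 - fps_X ^ (2 * i + 1) :: 'a fps"
  have "fps_agree m (euler_fps 2 * ?Q\<^sup>2)
        (\<Sum>j\<le>2 * n. (-1) ^ (n + j) * (euler_fps 2 * gauss_binomial (fps_X\<^sup>2) (2 * n) j * fps_X ^ ?d j))"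
    unfolding finite_theta_identity [symmetric] sum_distrib_left
    by (simp only: ac_simps fps_agree_refl)
  also have "fps_agree m \<dots> (\<Sum>j\<le>2 * n. (-1) ^ (n + j) * fps_X ^ ?d j)"
    by (intro fps_agree_sum fps_agree_mult[OF fps_agree_refl] gauss_binomial_term_agree)
       (auto simp: n_def)
  also have "fps_agree m \<dots> theta_fps"
    by (rule theta_partial_sum_agree) (simp add: n_def)
  finally have theta: "fps_agree m (euler_fps 2 * ?Q\<^sup>2) theta_fps" .
  have "fps_agree m (euler_fps 1) (\<Prod>k\<in>{1..2 * n}. 1 - fps_X ^ (1 * k) :: 'a fps)"
    by (rule euler_fps_agree) (auto simp: n_def)
  also have "(\<Prod>k\<in>{1..2 * n}. 1 - fps_X ^ (1 * k) :: 'a fps) =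
             (\<Prod>k\<in>{1..n}. 1 - fps_X ^ (2 * k)) * ?Q"
    by (subst prod_atLeast1_atMost_even_odd) simp
  also have "fps_agree m \<dots> (euler_fps 2 * ?Q)"
    by (intro fps_agree_mult fps_agree_refl fps_agree_sym[OF euler_fps_agree]) (auto simp: n_def)
  finally have "fps_agree m (euler_fps 1 ^ 2) ((euler_fps 2 * ?Q) ^ 2)"
    by (rule fps_agree_power)
  also have "(euler_fps 2 * ?Q) ^ 2 = euler_fps 2 * (euler_fps 2 * ?Q\<^sup>2)"
    by (simp add: power2_eq_square mult_ac)
  also have "fps_agree m \<dots> (euler_fps 2 * theta_fps)"
    using theta by (rule fps_agree_mult[OF fps_agree_refl])
  finally show "fps_agree m (euler_fps 1 ^ 2) (euler_fps 2 * theta_fps :: 'a fps)" .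
qed

lemma euler_fps_squared_compose_X_power:
  assumes "k \<ge> 1"
  shows "euler_fps k ^ 2 = euler_fps (2 * k) * (theta_fps oo fps_X ^ k :: 'a::field fps)"
proof -
  have "(euler_fps 1 ^ 2) oo fps_X ^ k = (euler_fps 2 * theta_fps) oo (fps_X ^ k :: 'a fps)"
    by (simp only: euler_fps_1_squared)
  with assms show ?thesis
    by (simp add: fps_compose_mult_distrib euler_fps_compose_X_power mult.commute
             flip: fps_compose_power)
qed

lemma theta_quotient_of_eta_quotient:
  fixes F :: "'a::field fps"
  assumes "F * (euler_fps 1 ^ 2 * euler_fps 6) = euler_fps 2 * euler_fps 3 ^ 2"
  shows "F * theta_fps = theta_fps oo fps_X ^ 3"
proof -
  have "F * theta_fps * (euler_fps 2 * euler_fps 6) = F * (euler_fps 1 ^ 2 * euler_fps 6)"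
    by (simp only: euler_fps_1_squared ac_simps)
  also have "\<dots> = euler_fps 2 * euler_fps 3 ^ 2"
    by (rule assms)
  also have "\<dots> = (theta_fps oo fps_X ^ 3) * (euler_fps 2 * euler_fps 6)"
    by (simp add: euler_fps_squared_compose_X_power [of 3] mult_ac)
  finally show ?thesis
    by (simp add: euler_fps_neq_0)
qed

lemma square_mod_3: "(r::nat)\<^sup>2 mod 3 = (if 3 dvd r then 0 else 1)"
proof -
  have square: "r\<^sup>2 mod 3 = (r mod 3)\<^sup>2 mod 3"
    by (simp add: power_mod)
  have "r mod 3 = 0 \<or> r mod 3 = 1 \<or> r mod 3 = 2"
    by presburger
  then show ?thesis
    by (elim disjE) (simp_all add: square dvd_eq_mod_eq_0)
qed

lemma theta_fps_nth_9: "theta_fps $ (9 * k) = theta_fps $ k"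
proof -
  have "(\<exists>r. 9 * k = r\<^sup>2) \<longleftrightarrow> (\<exists>s. k = s\<^sup>2)"
  proof
    assume "\<exists>r. 9 * k = r\<^sup>2"
    then obtain r where r: "9 * k = r\<^sup>2" ..
    then have "r\<^sup>2 mod 3 = 0"
      by (simp flip: r)
    then have "3 dvd r"
      using square_mod_3[of r] by (simp split: if_splits)
    then obtain s where "r = 3 * s" ..
    with r have "k = s\<^sup>2"
      by (simp add: power_mult_distrib)
    then show "\<exists>s. k = s\<^sup>2" ..
  next
    assume "\<exists>s. k = s\<^sup>2"
    then obtain s where "k = s\<^sup>2" ..
    then have "9 * k = (3 * s)\<^sup>2"
      by (simp add: power_mult_distrib)
    then show "\<exists>r. 9 * k = r\<^sup>2" ..
  qed
  then show ?thesis
    by (simp add: theta_fps_def minus_one_power_iff)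
qed

lemma theta_fps_minus_dilation_nth:
  assumes "n mod 3 \<noteq> 1"
  shows "(theta_fps - (theta_fps oo fps_X ^ 9)) $ n = 0"
proof (cases "9 dvd n")
  case True
  then obtain k where "n = 9 * k" ..
  then show ?thesis
    by (simp add: fps_nth_compose_X_power theta_fps_nth_9)
next
  case False
  have "\<nexists>r. n = r\<^sup>2"
  proof
    assume "\<exists>r. n = r\<^sup>2"
    then obtain r where n: "n = r\<^sup>2" ..
    with assms have "3 dvd r"
      using square_mod_3[of r] by (auto split: if_splits)
    then obtain s where "r = 3 * s" ..
    with n have "n = 9 * s\<^sup>2"
      by (simp add: power_mult_distrib)
    with False show False
      by simp
  qed
  with False show ?thesis
    by (simp add: fps_nth_compose_X_power theta_fps_nth_nonsquare)
qed

section \<open>Twisting by cube roots of unity\<close>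

context
  fixes w :: "'a::field_char_0"
  assumes w: "1 + w + w\<^sup>2 = 0"
begin

lemma cube_root_unity: "w ^ 3 = 1"
proof -
  have "w ^ 3 - 1 = (w - 1) * (1 + w + w\<^sup>2)"
    by (simp add: algebra_simps power2_eq_square power3_eq_cube)
  with w show ?thesis
    by simp
qed

lemma cube_root_unity_square: "(w\<^sup>2) ^ 3 = 1"
proof -
  have "(w\<^sup>2) ^ 3 = (w ^ 3)\<^sup>2"
    by (simp only: power_mult [symmetric] mult.commute)
  then show ?thesis
    by (simp add: cube_root_unity)
qed

lemma cube_root_unity_power_mod: "w ^ n = w ^ (n mod 3)"
proof -
  have "w ^ n = (w ^ 3) ^ (n div 3) * w ^ (n mod 3)"
    by (simp flip: power_mult power_add)
  then show ?thesis
    by (simp add: cube_root_unity)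
qed

lemma cube_root_unity_power_sum: "1 + w ^ n + (w\<^sup>2) ^ n = (if 3 dvd n then 3 else 0)"
proof -
  have square: "(w\<^sup>2) ^ n = (w ^ n)\<^sup>2"
    by (simp flip: power_mult add: mult.commute)
  have "n mod 3 = 0 \<or> n mod 3 = 1 \<or> n mod 3 = 2"
    by presburger
  then show ?thesis
  proof (elim disjE)
    assume "n mod 3 = 0"
    then show ?thesis
      using cube_root_unity_power_mod[of n] by (simp add: square dvd_eq_mod_eq_0)
  next
    assume "n mod 3 = 1"
    then show ?thesis
      using w cube_root_unity_power_mod[of n] by (simp add: square dvd_eq_mod_eq_0)
  next
    assume "n mod 3 = 2"
    moreover have "(w\<^sup>2)\<^sup>2 = w"
      using cube_root_unity by (simp flip: power_mult add: power_Suc2 [of w 3, simplified])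
    ultimately show ?thesis
      using w cube_root_unity_power_mod[of n] by (simp add: square dvd_eq_mod_eq_0 add_ac)
  qed
qed

lemma cube_roots_one_minus_X_power:
  "(1 - fps_X ^ m) * (1 - fps_const (w ^ m) * fps_X ^ m) * (1 - fps_const ((w\<^sup>2) ^ m) * fps_X ^ m) =
   (if 3 dvd m then (1 - fps_X ^ m) ^ 3 else 1 - fps_X ^ (3 * m))"
proof (cases "3 dvd m")
  case True
  then obtain k where "m = 3 * k" ..
  then have "w ^ m = 1" "(w\<^sup>2) ^ m = 1"
    by (simp_all only: power_mult cube_root_unity cube_root_unity_square power_one)
  with True show ?thesis
    by (simp add: power3_eq_cube)
next
  case False
  define z where "z = fps_const (w ^ m)"
  have square: "fps_const ((w\<^sup>2) ^ m) = z\<^sup>2"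
    by (simp add: z_def flip: power_mult add: mult.commute)
  have "1 + w ^ m + (w ^ m)\<^sup>2 = 0"
    using cube_root_unity_power_sum [of m] False by (simp flip: power_mult add: mult.commute)
  then have sum: "1 + z + z\<^sup>2 = 0"
    unfolding z_def by (metis fps_const_1_eq_1 fps_const_add fps_const_power fps_const_0_eq_0)
  have "z ^ 3 = fps_const ((w ^ 3) ^ m)"
    by (simp add: z_def flip: power_mult add: mult.commute)
  then have cube: "z ^ 3 = 1"
    by (simp add: cube_root_unity)
  have "(1 - fps_X ^ m) * (1 - z * fps_X ^ m) * (1 - z\<^sup>2 * fps_X ^ m) =
        1 - (1 + z + z\<^sup>2) * fps_X ^ m + z * (1 + z + z\<^sup>2) * (fps_X ^ m)\<^sup>2 - z ^ 3 * (fps_X ^ m) ^ 3"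
    by (simp add: algebra_simps power2_eq_square power3_eq_cube)
  with False show ?thesis
    unfolding square z_def [symmetric] sum cube by (simp flip: power_mult add: mult.commute)
qed

lemma cube_roots_partial_prod:
  assumes "\<not> 3 dvd i"
  shows "(\<Prod>j\<in>{1..3 * M}. (1 - fps_X ^ (i * j)) * (1 - fps_const (w ^ (i * j)) * fps_X ^ (i * j))
                            * (1 - fps_const ((w\<^sup>2) ^ (i * j)) * fps_X ^ (i * j)))
           * (\<Prod>k\<in>{1..M}. 1 - fps_X ^ (9 * i * k))
         = (\<Prod>j\<in>{1..3 * M}. 1 - fps_X ^ (3 * i * j)) * (\<Prod>k\<in>{1..M}. 1 - fps_X ^ (3 * i * k)) ^ 3"
proof -
  define h where "h j = (1 - fps_X ^ (i * j)) * (1 - fps_const (w ^ (i * j)) * fps_X ^ (i * j))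
                        * (1 - fps_const ((w\<^sup>2) ^ (i * j)) * fps_X ^ (i * j))" for j
  define g where "g j = (1 - fps_X ^ (3 * i * j) :: 'a fps)" for j
  have h_coprime: "h j = g j" if "\<not> 3 dvd j" for j
  proof -
    from that assms have "\<not> 3 dvd (i * j)"
      by (simp add: prime_dvd_mult_iff)
    then show ?thesis
      unfolding h_def cube_roots_one_minus_X_power by (simp add: g_def mult_ac)
  qed
  have h_multiple: "h (3 * k) = g k ^ 3" for k
    unfolding h_def cube_roots_one_minus_X_power by (simp add: g_def mult_ac)
  have g_9: "1 - fps_X ^ (9 * i * k) = g (3 * k)" for k
    by (simp add: g_def mult_ac)
  note shift = prod.atLeast1_atMost_eq [folded One_nat_def]
  have "prod h {1..3 * M} * (\<Prod>k\<in>{1..M}. g (3 * k)) =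
        (\<Prod>m<M. g (3 * m + 1) * g (3 * m + 2) * g (3 * m + 3) * g (Suc m) ^ 3)"
    unfolding prod_atLeast1_atMost_triple unfolding shift prod.distrib [symmetric]
  proof (intro prod.cong refl)
    fix m
    have "h (3 * m + 1) = g (3 * m + 1)" "h (3 * m + 2) = g (3 * m + 2)"
      by (intro h_coprime; presburger)+
    moreover have "h (3 * m + 3) = g (Suc m) ^ 3"
      using h_multiple [of "Suc m"] by (simp add: add.commute)
    moreover have "3 * Suc m = 3 * m + 3"
      by simp
    ultimately show "h (3 * m + 1) * h (3 * m + 2) * h (3 * m + 3) * g (3 * Suc m) =
                     g (3 * m + 1) * g (3 * m + 2) * g (3 * m + 3) * g (Suc m) ^ 3"
      by (simp only: ac_simps)
  qed
  also have "\<dots> = prod g {1..3 * M} * prod g {1..M} ^ 3"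
    unfolding prod_atLeast1_atMost_triple unfolding shift prod_power_distrib
              prod.distrib [symmetric]
    by (simp add: mult_ac)
  finally show ?thesis
    by (simp add: h_def g_def g_9)
qed

lemma euler_fps_cube_roots:
  assumes "\<not> 3 dvd i"
  shows "euler_fps i * fps_scale w (euler_fps i) * fps_scale (w\<^sup>2) (euler_fps i) * euler_fps (9 * i) =
         euler_fps (3 * i) ^ 4"
proof (rule fps_eq_if_agree)
  fix n :: nat
  from assms have "i \<ge> 1"
    by (cases i) auto
  let ?E = "\<lambda>k M. \<Prod>j\<in>{1..M}. 1 - fps_X ^ (k * j) :: 'a fps"
  have truncate: "fps_agree n
          (euler_fps i * fps_scale w (euler_fps i) * fps_scale (w\<^sup>2) (euler_fps i) * euler_fps (9 * i))
          (?E i (3 * n) * fps_scale w (?E i (3 * n)) * fps_scale (w\<^sup>2) (?E i (3 * n)) * ?E (9 * i) n)"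
    using \<open>i \<ge> 1\<close> by (intro fps_agree_mult fps_agree_fps_scale euler_fps_agree) auto
  have partial: "?E i (3 * n) * fps_scale w (?E i (3 * n)) * fps_scale (w\<^sup>2) (?E i (3 * n)) * ?E (9 * i) n =
                 ?E (3 * i) (3 * n) * ?E (3 * i) n ^ 3"
    using cube_roots_partial_prod [OF assms, of n]
    by (simp add: fps_scale_prod fps_scale_one_minus_X_power prod.distrib)
  have "fps_agree n (?E (3 * i) (3 * n) * ?E (3 * i) n ^ 3) (euler_fps (3 * i) * euler_fps (3 * i) ^ 3)"
    using \<open>i \<ge> 1\<close> by (intro fps_agree_mult fps_agree_power fps_agree_sym [OF euler_fps_agree]) auto
  with truncate show "fps_agree n
      (euler_fps i * fps_scale w (euler_fps i) * fps_scale (w\<^sup>2) (euler_fps i) * euler_fps (9 * i))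
      (euler_fps (3 * i) ^ 4)"
    unfolding partial power_Suc [of _ 3, simplified] by (rule fps_agree_trans)
qed

lemma fps_trisection:
  "3 * (Abs_fps (\<lambda>n. f $ (3 * n)) oo fps_X ^ 3) = f + fps_scale w f + fps_scale (w\<^sup>2) f"
proof (rule fps_ext)
  fix n
  have "(f + fps_scale w f + fps_scale (w\<^sup>2) f) $ n = (1 + w ^ n + (w\<^sup>2) ^ n) * f $ n"
    by (simp add: algebra_simps)
  then show "(3 * (Abs_fps (\<lambda>n. f $ (3 * n)) oo fps_X ^ 3)) $ n =
             (f + fps_scale w f + fps_scale (w\<^sup>2) f) $ n"
    by (simp add: cube_root_unity_power_sum fps_nth_compose_X_power numeral_fps_const)
qed

lemma fps_scale_theta_fps_compose_X_power:
  assumes "3 dvd d"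
  shows "fps_scale w (theta_fps oo fps_X ^ d) = theta_fps oo fps_X ^ d"
        "fps_scale (w\<^sup>2) (theta_fps oo fps_X ^ d) = theta_fps oo fps_X ^ d"
proof -
  from assms obtain k where d: "d = 3 * k" ..
  have "w ^ d = 1" "(w\<^sup>2) ^ d = 1"
    by (simp_all only: d power_mult cube_root_unity cube_root_unity_square power_one)
  then show "fps_scale w (theta_fps oo fps_X ^ d) = theta_fps oo fps_X ^ d"
            "fps_scale (w\<^sup>2) (theta_fps oo fps_X ^ d) = theta_fps oo fps_X ^ d"
    by (simp_all add: fps_scale_compose_X_power)
qed

lemma theta_fps_cube_roots_sigma2:
  "theta_fps * fps_scale w theta_fps + theta_fps * fps_scale (w\<^sup>2) theta_fps
     + fps_scale w theta_fps * fps_scale (w\<^sup>2) theta_fps = 3 * (theta_fps oo fps_X ^ 9 :: 'a fps)\<^sup>2"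
proof -
  define A where "A = (theta_fps oo fps_X ^ 9 :: 'a fps)"
  define B where "B = theta_fps - A"
  define W where "W = fps_const w"
  have B_scale: "fps_scale c B = fps_const c * B" if "c ^ 3 = 1" for c
    using that unfolding B_def A_def
    by (rule fps_scale_exponents_1_mod_3) (rule theta_fps_minus_dilation_nth)
  have A_scale: "fps_scale w A = A" "fps_scale (w\<^sup>2) A = A"
    unfolding A_def by (simp_all add: fps_scale_theta_fps_compose_X_power)
  have theta: "theta_fps = A + B"
    by (simp add: B_def)
  have theta_w: "fps_scale w theta_fps = A + W * B"
    unfolding theta fps_scale_add A_scale W_def by (simp add: B_scale [OF cube_root_unity])
  have theta_w2: "fps_scale (w\<^sup>2) theta_fps = A + W\<^sup>2 * B"
    unfolding theta fps_scale_add A_scale W_def by (simp add: B_scale [OF cube_root_unity_square])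
  have "1 + W + W\<^sup>2 = 0"
    unfolding W_def using w by (metis fps_const_1_eq_1 fps_const_add fps_const_power fps_const_0_eq_0)
  moreover have "(A + B) * (A + W * B) + (A + B) * (A + W\<^sup>2 * B) + (A + W * B) * (A + W\<^sup>2 * B) =
                 3 * A\<^sup>2 + 2 * (1 + W + W\<^sup>2) * A * B + W * (1 + W + W\<^sup>2) * B\<^sup>2"
    by (simp add: algebra_simps power2_eq_square power3_eq_cube)
  ultimately show ?thesis
    by (simp add: A_def [symmetric] theta_w theta_w2 flip: theta)
qed

lemma theta_fps_cube_roots_prod:
  "theta_fps * fps_scale w theta_fps * fps_scale (w\<^sup>2) theta_fps * (theta_fps oo fps_X ^ 9) =
   (theta_fps oo fps_X ^ 3 :: 'a fps) ^ 4"
proof -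
  let ?S = "\<lambda>f :: 'a fps. f * fps_scale w f * fps_scale (w\<^sup>2) f"
  let ?f = "euler_fps :: nat \<Rightarrow> 'a fps"
  let ?theta3 = "theta_fps oo fps_X ^ 3 :: 'a fps" and ?theta9 = "theta_fps oo fps_X ^ 9 :: 'a fps"
  have "?S (?f 1) ^ 2 = ?f 1 ^ 2 * fps_scale w (?f 1 ^ 2) * fps_scale (w\<^sup>2) (?f 1 ^ 2)"
    by (simp only: power_mult_distrib fps_scale_power)
  also have "\<dots> = ?S (?f 2) * ?S theta_fps"
    by (simp only: euler_fps_1_squared fps_scale_mult ac_simps)
  finally have gauss: "?S (?f 1) ^ 2 = ?S (?f 2) * ?S theta_fps" .
  have f1: "?S (?f 1) * ?f 9 = ?f 3 ^ 4" and f2: "?S (?f 2) * ?f 18 = ?f 6 ^ 4"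
    using euler_fps_cube_roots [of 1] euler_fps_cube_roots [of 2] by simp_all
  have f3: "?f 3 ^ 2 = ?f 6 * ?theta3" and f9: "?f 9 ^ 2 = ?f 18 * ?theta9"
    using euler_fps_squared_compose_X_power [of 3] euler_fps_squared_compose_X_power [of 9]
    by simp_all
  have "?S theta_fps * ?theta9 * (?f 6 ^ 4 * ?f 18) = (?S (?f 2) * ?S theta_fps) * (?f 18 * ?theta9) * ?f 18"
    by (simp only: f2 [symmetric] ac_simps)
  also have "\<dots> = (?S (?f 1) * ?f 9)\<^sup>2 * ?f 18"
    by (simp only: gauss [symmetric] f9 [symmetric] power_mult_distrib)
  also have "\<dots> = (?f 3 ^ 4)\<^sup>2 * ?f 18"
    by (simp only: f1)
  also have "\<dots> = (?f 3 ^ 2) ^ 4 * ?f 18"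
    by (simp only: power_mult [symmetric] mult.commute)
  also have "\<dots> = ?theta3 ^ 4 * (?f 6 ^ 4 * ?f 18)"
    by (simp only: f3 power_mult_distrib ac_simps)
  finally show ?thesis
    by (simp add: euler_fps_neq_0)
qed

lemma trisection_mult_theta_cube_roots:
  fixes F :: "'a fps"
  assumes F: "F * theta_fps = theta_fps oo fps_X ^ 3"
  shows "3 * (Abs_fps (\<lambda>n. F $ (3 * n)) oo fps_X ^ 3) *
           (theta_fps * fps_scale w theta_fps * fps_scale (w\<^sup>2) theta_fps) =
         3 * (theta_fps oo fps_X ^ 3) * (theta_fps oo fps_X ^ 9)\<^sup>2"
proof -
  let ?theta_w = "fps_scale w theta_fps" and ?theta_w2 = "fps_scale (w\<^sup>2) theta_fps"
  have F_w: "fps_scale w F * ?theta_w = theta_fps oo fps_X ^ 3"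
    using arg_cong [OF F, of "fps_scale w"]
    by (simp add: fps_scale_mult fps_scale_theta_fps_compose_X_power)
  have F_w2: "fps_scale (w\<^sup>2) F * ?theta_w2 = theta_fps oo fps_X ^ 3"
    using arg_cong [OF F, of "fps_scale (w\<^sup>2)"]
    by (simp add: fps_scale_mult fps_scale_theta_fps_compose_X_power)
  have "3 * (Abs_fps (\<lambda>n. F $ (3 * n)) oo fps_X ^ 3) * (theta_fps * ?theta_w * ?theta_w2) =
        (F + fps_scale w F + fps_scale (w\<^sup>2) F) * (theta_fps * ?theta_w * ?theta_w2)"
    by (simp only: fps_trisection)
  also have "\<dots> = (F * theta_fps) * ?theta_w * ?theta_w2 + (fps_scale w F * ?theta_w) * theta_fps * ?theta_w2
                   + (fps_scale (w\<^sup>2) F * ?theta_w2) * theta_fps * ?theta_w"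
    by (simp add: algebra_simps)
  also have "\<dots> = (theta_fps oo fps_X ^ 3) *
                     (theta_fps * ?theta_w + theta_fps * ?theta_w2 + ?theta_w * ?theta_w2)"
    unfolding F F_w F_w2 by (simp add: algebra_simps)
  finally show ?thesis
    by (simp add: theta_fps_cube_roots_sigma2 mult_ac)
qed

lemma trisection_of_theta_quotient:
  fixes F :: "'a fps"
  assumes F: "F * theta_fps = theta_fps oo fps_X ^ 3"
  shows "Abs_fps (\<lambda>n. F $ (3 * n)) = F ^ 3"
proof -
  define E where "E = Abs_fps (\<lambda>n. F $ (3 * n)) oo fps_X ^ 3"
  define G where "G = F oo fps_X ^ 3"
  define T where "T = theta_fps * fps_scale w theta_fps * fps_scale (w\<^sup>2) theta_fps"
  define theta3 where "theta3 = (theta_fps oo fps_X ^ 3 :: 'a fps)"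
  define theta9 where "theta9 = (theta_fps oo fps_X ^ 9 :: 'a fps)"
  have sigma2: "3 * E * T = 3 * theta3 * theta9\<^sup>2"
    unfolding E_def T_def theta3_def theta9_def using F by (rule trisection_mult_theta_cube_roots)
  have prod: "T * theta9 = theta3 ^ 4"
    unfolding T_def theta3_def theta9_def by (rule theta_fps_cube_roots_prod)
  have G: "G * theta3 = theta9"
    using arg_cong [OF F, of "\<lambda>f. f oo fps_X ^ 3"]
    by (simp add: G_def theta3_def theta9_def fps_compose_mult_distrib fps_compose_X_power_X_power)
  have "(3 * theta3 ^ 4) * E = 3 * E * T * theta9"
    by (simp only: prod [symmetric] ac_simps)
  also have "\<dots> = 3 * theta3 * theta9\<^sup>2 * theta9"
    by (simp only: sigma2)
  also have "\<dots> = (3 * theta3 ^ 4) * G ^ 3"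
    by (simp add: G [symmetric] power_mult_distrib eval_nat_numeral mult_ac)
  finally have "(3 * theta3 ^ 4) * E = (3 * theta3 ^ 4) * G ^ 3" .
  moreover have "theta3 $ 0 = 1"
    by (simp add: theta3_def fps_nth_compose_X_power)
  then have "3 * theta3 ^ 4 \<noteq> 0"
    by (metis fps_zero_nth mult_eq_0_iff power_not_zero zero_neq_numeral zero_neq_one)
  ultimately have "E = F ^ 3 oo fps_X ^ 3"
    by (simp add: G_def fps_compose_power)
  then show ?thesis
    unfolding E_def by (rule fps_compose_X_power_inject) simp
qed

end

section \<open>Rational coefficients\<close>

definition fps_of_rat :: "rat fps \<Rightarrow> 'a::field_char_0 fps" where
  "fps_of_rat f = Abs_fps (\<lambda>n. of_rat (f $ n))"

lemma fps_of_rat_nth [simp]: "fps_of_rat f $ n = of_rat (f $ n)"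
  by (simp add: fps_of_rat_def)

lemma fps_of_rat_one_minus_X_power: "fps_of_rat (1 - fps_X ^ k) = 1 - fps_X ^ k"
  by (rule fps_ext) simp

lemma fps_of_rat_mult: "fps_of_rat (f * g) = fps_of_rat f * fps_of_rat g"
  by (rule fps_ext) (simp add: fps_mult_nth of_rat_sum of_rat_mult)

lemma fps_of_rat_1: "fps_of_rat 1 = 1"
  by (rule fps_ext) simp

lemma fps_of_rat_power: "fps_of_rat (f ^ n) = fps_of_rat f ^ n"
  by (induction n) (simp_all add: fps_of_rat_1 fps_of_rat_mult)

lemma fps_of_rat_prod: "fps_of_rat (prod f A) = (\<Prod>x\<in>A. fps_of_rat (f x))"
  by (induction A rule: infinite_finite_induct) (simp_all add: fps_of_rat_1 fps_of_rat_mult)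

lemma fps_of_rat_inject:
  assumes "(fps_of_rat f :: 'a::field_char_0 fps) = fps_of_rat g"
  shows "f = g"
proof (rule fps_ext)
  fix n
  from assms have "(of_rat (f $ n) :: 'a) = of_rat (g $ n)"
    by (metis fps_of_rat_nth)
  then show "f $ n = g $ n"
    by simp
qed

lemma fps_of_rat_eta_fps: "fps_of_rat (eta_fps i) = euler_fps i"
proof (rule fps_ext)
  fix n
  have "fps_of_rat (eta_fps i) $ n = fps_of_rat (\<Prod>k\<in>{1..n}. 1 - fps_X ^ (i * k)) $ n"
    by (simp add: eta_fps_def)
  also have "\<dots> = euler_fps i $ n"
    by (simp add: euler_fps_def fps_of_rat_prod fps_of_rat_one_minus_X_power)
  finally show "fps_of_rat (eta_fps i) $ n = euler_fps i $ n" .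
qed

lemma fps_of_rat_trisection:
  assumes "fps_of_rat P * theta_fps = (theta_fps oo fps_X ^ 3 :: complex fps)"
  shows "Abs_fps (\<lambda>n. P $ (3 * n)) = P ^ 3"
proof (rule fps_of_rat_inject)
  define w where "w = Complex (-1/2) (sqrt 3 / 2)"
  have "1 + w + w\<^sup>2 = 0"
    by (simp add: w_def power2_eq_square complex_eq_iff)
  with assms have "Abs_fps (\<lambda>n. fps_of_rat P $ (3 * n)) = (fps_of_rat P ^ 3 :: complex fps)"
    by (intro trisection_of_theta_quotient)
  moreover have "fps_of_rat (Abs_fps (\<lambda>n. P $ (3 * n))) = (Abs_fps (\<lambda>n. fps_of_rat P $ (3 * n)) :: complex fps)"
    by (rule fps_ext) simp
  ultimately show "fps_of_rat (Abs_fps (\<lambda>n. P $ (3 * n))) = (fps_of_rat (P ^ 3) :: complex fps)"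
    by (simp only: fps_of_rat_power)
qed

theorem theorem4p3:
  shows "m_convolutive 3 P_seq"
proof -
  define P where "P = eta_fps 2 * eta_fps 3 ^ 2 / (eta_fps 1 ^ 2 * eta_fps 6)"
  have unit: "(eta_fps 1 ^ 2 * eta_fps 6) $ 0 \<noteq> 0"
    by (simp add: eta_fps_def)
  have "P * (eta_fps 1 ^ 2 * eta_fps 6) =
        eta_fps 2 * eta_fps 3 ^ 2 * (inverse (eta_fps 1 ^ 2 * eta_fps 6) * (eta_fps 1 ^ 2 * eta_fps 6))"
    unfolding P_def fps_divide_unit [OF unit] by (simp only: mult.assoc)
  then have "P * (eta_fps 1 ^ 2 * eta_fps 6) = eta_fps 2 * eta_fps 3 ^ 2"
    by (simp only: inverse_mult_eq_1 [OF unit] mult_1_right)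
  then have "fps_of_rat (P * (eta_fps 1 ^ 2 * eta_fps 6)) = (fps_of_rat (eta_fps 2 * eta_fps 3 ^ 2) :: complex fps)"
    by (rule arg_cong)
  then have "fps_of_rat P * (euler_fps 1 ^ 2 * euler_fps 6) = (euler_fps 2 * euler_fps 3 ^ 2 :: complex fps)"
    by (simp only: fps_of_rat_mult fps_of_rat_power fps_of_rat_eta_fps)
  then have trisection: "Abs_fps (\<lambda>n. P $ (3 * n)) = P ^ 3"
    by (intro fps_of_rat_trisection theta_quotient_of_eta_quotient)
  have P_seq: "P_seq = fps_nth P"
    by (simp add: fun_eq_iff P_seq_def P_def)
  show ?thesis
    unfolding m_convolutive_def P_seq fps_nth_inverse by (rule trisection)
qed

end
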